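(* Let $\tau\in[0,1)$. In a finite-horizon MDP with wealth levels as described in the context, the optimal upper $\tau$-quantile $\overline{q}^*=\max_\pi \overline{q}^\pi_\tau$ (maximum over all policies at horizon $T$, with respect to $\prec_{\mathcal W}$) satisfies $$\overline{q}^* = \max\{w\in\mathcal W_T : G^*(w)\ge 1-\tau\},\qquad\text{where } G^*(w)=\max_\pi G^\pi(w)\ \text{ for all } w,$$ the maximum over $w$ being with respect to $\preceq_{\mathcal W}$ and the maximum over $\pi$ being over all policies at horizon $T$.
   Context: An MDP is a tuple $(\mathcal S,\mathcal A,\mathcal P,r,s_0)$ with finite state set $\mathcal S$, finite action set $\mathcal A$, transition probabilities $\mathcal P(s,a,s')$, reward function $r:\mathcal S\times\mathcal A\to\mathcal R$ (values in some set $\mathcal R$), initial state $s_0$, and finite horizon $T$. A $t$-history is $h_t=(s_0,a_0,s_1,\dots,a_{t-1},s_t)$; a policy is a sequence of $T$ decision rules (possibly history-dependent and randomized) selecting actions. The wealth of a history is defined by $w(h_0)=w_0$ and $w(h_t)=w(h_{t-1})\circ r(s_{t-1},a_{t-1})$, where $\circ:\mathcal W\times\mathcal R\to\mathcal W$ is a binary operation on a wealth space $\mathcal W$ with left identity $w_0$. Let $\mathcal W_T$ be the set of wealth levels of $T$-histories; it is totally ordered by $\preceq_{\mathcal W}$ (strict part $\prec_{\mathcal W}$), has a least element $w_{\min}$ and a greatest element $w_{\max}$, and carries a distance $d$ consistent with the order. For a policy $\pi$, $p^\pi(w)$ is the probability that the $T$-history generated by $\pi$ from $s_0$ has wealth $w\in\mathcal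 W_T$; $G^\pi(w)=\sum_{w\preceq_{\mathcal W} w'}p^\pi(w')$. The upper $\tau$-quantile of $\pi$ is $\overline{q}^\pi_\tau=\max\{w\in\mathcal W_T: G^\pi(w)\ge 1-\tau\}$ (maximum w.r.t. $\prec_{\mathcal W}$). *)

theory Defs
  imports Complex_Main
begin

text \<open>A T-history is represented by its state sequence ss = [s_0,...,s_T]
 (length T+1) and its action sequence as = [a_0,...,a_{T-1}] (length T).
 A (history-dependent, randomized) policy is a family of decision rules
 pol t ss as a = probability of choosing action a at time t after the
 t-history (ss, as) with length ss = t+1, length as = t.\<close>

definition histories :: "'s \<Rightarrow> nat \<Rightarrow> ('s list \<times> 'a list) set" where
  "histories s0 T = {(ss, as). length ss = Suc T \<and> length as = T \<and> ss ! 0 = s0}"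

definition is_policy :: "nat \<Rightarrow> (nat \<Rightarrow> 's list \<Rightarrow> 'a::finite list \<Rightarrow> 'a \<Rightarrow> real) \<Rightarrow> bool" where
  "is_policy T pol \<longleftrightarrow> (\<forall>t<T. \<forall>ss as.
      (\<forall>a. 0 \<le> pol t ss as a) \<and> (\<Sum>a\<in>(UNIV::'a set). pol t ss as a) = 1)"

definition hist_prob ::
  "('s \<Rightarrow> 'a \<Rightarrow> 's \<Rightarrow> real) \<Rightarrow> nat \<Rightarrow> (nat \<Rightarrow> 's list \<Rightarrow> 'a list \<Rightarrow> 'a \<Rightarrow> real)
     \<Rightarrow> 's list \<times> 'a list \<Rightarrow> real" where
  "hist_prob P T pol h = (case h of (ss, as) \<Rightarrow>
      (\<Prod>t<T. pol t (take (Suc t) ss) (take t as) (as ! t) * P (ss ! t) (as ! t) (ss ! Suc t)))"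

definition wealth :: "('w \<Rightarrow> 'r \<Rightarrow> 'w) \<Rightarrow> 'w \<Rightarrow> ('s \<Rightarrow> 'a \<Rightarrow> 'r) \<Rightarrow> 's list \<times> 'a list \<Rightarrow> 'w" where
  "wealth circ w0 r h = (case h of (ss, as) \<Rightarrow>
      foldl (\<lambda>w (s, a). circ w (r s a)) w0 (zip ss as))"

definition wealth_levels ::
  "('w \<Rightarrow> 'r \<Rightarrow> 'w) \<Rightarrow> 'w \<Rightarrow> ('s \<Rightarrow> 'a \<Rightarrow> 'r) \<Rightarrow> 's \<Rightarrow> nat \<Rightarrow> 'w set" where
  "wealth_levels circ w0 r s0 T = wealth circ w0 r ` histories s0 T"

definition pw ::
  "('s \<Rightarrow> 'a \<Rightarrow> 's \<Rightarrow> real) \<Rightarrow> ('w \<Rightarrow> 'r \<Rightarrow> 'w) \<Rightarrow> 'w \<Rightarrow> ('s \<Rightarrow> 'a \<Rightarrow> 'r) \<Rightarrow> 's \<Rightarrow> nat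
    \<Rightarrow> (nat \<Rightarrow> 's list \<Rightarrow> 'a list \<Rightarrow> 'a \<Rightarrow> real) \<Rightarrow> 'w \<Rightarrow> real" where
  "pw P circ w0 r s0 T pol w =
     (\<Sum>h\<in>{h\<in>histories s0 T. wealth circ w0 r h = w}. hist_prob P T pol h)"

definition Gw ::
  "('s \<Rightarrow> 'a \<Rightarrow> 's \<Rightarrow> real) \<Rightarrow> ('w::linorder \<Rightarrow> 'r \<Rightarrow> 'w) \<Rightarrow> 'w \<Rightarrow> ('s \<Rightarrow> 'a \<Rightarrow> 'r) \<Rightarrow> 's \<Rightarrow> nat
    \<Rightarrow> (nat \<Rightarrow> 's list \<Rightarrow> 'a list \<Rightarrow> 'a \<Rightarrow> real) \<Rightarrow> 'w \<Rightarrow> real" where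
  "Gw P circ w0 r s0 T pol w =
     (\<Sum>w'\<in>{w'\<in>wealth_levels circ w0 r s0 T. w \<le> w'}. pw P circ w0 r s0 T pol w')"

definition upper_quantile ::
  "('s \<Rightarrow> 'a \<Rightarrow> 's \<Rightarrow> real) \<Rightarrow> ('w::linorder \<Rightarrow> 'r \<Rightarrow> 'w) \<Rightarrow> 'w \<Rightarrow> ('s \<Rightarrow> 'a \<Rightarrow> 'r) \<Rightarrow> 's \<Rightarrow> nat
    \<Rightarrow> real \<Rightarrow> (nat \<Rightarrow> 's list \<Rightarrow> 'a list \<Rightarrow> 'a \<Rightarrow> real) \<Rightarrow> 'w" where
  "upper_quantile P circ w0 r s0 T \<tau> pol =
     Max {w\<in>wealth_levels circ w0 r s0 T. Gw P circ w0 r s0 T pol w \<ge> 1 - \<tau>}"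

text \<open>Optimal tail function G^*(w) (supremum over all policies; the theorem
 asserts that it is attained).\<close>
definition Gstar ::
  "('s \<Rightarrow> 'a::finite \<Rightarrow> 's \<Rightarrow> real) \<Rightarrow> ('w::linorder \<Rightarrow> 'r \<Rightarrow> 'w) \<Rightarrow> 'w \<Rightarrow> ('s \<Rightarrow> 'a \<Rightarrow> 'r) \<Rightarrow> 's \<Rightarrow> nat
    \<Rightarrow> 'w \<Rightarrow> real" where
  "Gstar P circ w0 r s0 T w =
     (SUP pol\<in>{pol. is_policy T pol}. Gw P circ w0 r s0 T pol w)"

end

theory Submission imports Defs "HOL-Analysis.Analysis" begin

text \<open>The tail function of a policy depends continuously on its finitely many relevant decision
 probabilities, and policies form a compact set, so for every wealth level some policy attains
 G^*(w). Every policy's quantile level w then also satisfies G^*(w) \<ge> 1 - \<tau>, which bounds its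
 quantile by the right-hand side; conversely a policy attaining G^* at that maximum reaches it.
 The least wealth level has tail probability 1 under every policy, so all maxima are over
 nonempty sets.\<close>

lemma finite_histories:
  "finite (histories (s0::'s::finite) T :: ('s list \<times> 'a::finite list) set)"
proof -
  have "histories s0 T \<subseteq> {ss::'s list. set ss \<subseteq> UNIV \<and> length ss = Suc T}
                          \<times> {as::'a list. set as \<subseteq> UNIV \<and> length as = T}"
    by (auto simp: histories_def)
  then show ?thesis
    by (rule finite_subset) (intro finite_cartesian_product finite_lists_length_eq finite)
qed

lemma histories_nonempty: "histories s0 T \<noteq> {}"
proof -
  have "(replicate (Suc T) s0, replicate T undefined) \<in> histories s0 T"
    by (simp add: histories_def)
  then show ?thesis by blast
qed

lemma histories_Suc:
  "histories s0 (Suc T) = (\<lambda>((ss, as), a, s'). (ss @ [s'], as @ [a])) ` (histories s0 T \<times> UNIV \<times> UNIV)"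
proof (intro equalityI subsetI)
  fix h assume "h \<in> histories s0 (Suc T)"
  then obtain ss as where h: "h = (ss, as)" and l: "length ss = Suc (Suc T)" "length as = Suc T"
    "ss ! 0 = s0"
    by (auto simp: histories_def)
  then have "(butlast ss, butlast as) \<in> histories s0 T"
    by (auto simp: histories_def nth_butlast)
  moreover have "h = (butlast ss @ [last ss], butlast as @ [last as])"
    using l h by (metis append_butlast_last_id list.size(3) nat.distinct(1))
  ultimately show "h \<in> (\<lambda>((ss, as), a, s'). (ss @ [s'], as @ [a])) ` (histories s0 T \<times> UNIV \<times> UNIV)"
    by (intro image_eqI[where x = "((butlast ss, butlast as), last as, last ss)"]) auto
qed (auto simp: histories_def nth_append)

lemma hist_prob_snoc:
  assumes "length ss = Suc T" "length as = T"
  shows "hist_prob P (Suc T) pol (ss @ [s'], as @ [a])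
       = hist_prob P T pol (ss, as) * (pol T ss as a * P (ss ! T) a s')"
proof -
  have "(\<Prod>t<T. pol t (take (Suc t) (ss @ [s'])) (take t (as @ [a])) ((as @ [a]) ! t)
                 * P ((ss @ [s']) ! t) ((as @ [a]) ! t) ((ss @ [s']) ! Suc t))
      = (\<Prod>t<T. pol t (take (Suc t) ss) (take t as) (as ! t) * P (ss ! t) (as ! t) (ss ! Suc t))"
    using assms by (intro prod.cong) (auto simp: nth_append)
  then show ?thesis using assms by (simp add: hist_prob_def nth_append)
qed

lemma sum_hist_prob_eq_1:
  fixes P :: "'s::finite \<Rightarrow> 'a::finite \<Rightarrow> 's \<Rightarrow> real"
  assumes P_sum: "\<And>s a. (\<Sum>s'\<in>UNIV. P s a s') = 1" and "is_policy T pol"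
  shows "(\<Sum>h\<in>histories s0 T. hist_prob P T pol h) = 1"
  using assms(2)
proof (induction T)
  case 0
  have "histories s0 0 = {([s0], [] :: 'a list)}"
    by (auto simp: histories_def length_Suc_conv)
  then show ?case by (simp add: hist_prob_def)
next
  case (Suc T)
  let ?snoc = "\<lambda>((ss, as), a, s'). (ss @ [s'], as @ [a])"
  have IH: "(\<Sum>h\<in>histories s0 T. hist_prob P T pol h) = 1"
    using Suc by (simp add: is_policy_def)
  have pol_sum: "(\<Sum>a\<in>UNIV. pol T ss as a) = 1" for ss as
    using Suc.prems by (simp add: is_policy_def)
  have inj: "inj_on ?snoc (histories s0 T \<times> (UNIV::'a set) \<times> (UNIV::'s set))"
    by (auto simp: inj_on_def)
  have "(\<Sum>h\<in>histories s0 (Suc T). hist_prob P (Suc T) pol h)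
      = (\<Sum>x\<in>histories s0 T \<times> (UNIV::'a set) \<times> (UNIV::'s set). hist_prob P (Suc T) pol (?snoc x))"
    unfolding histories_Suc by (rule sum.reindex[OF inj, unfolded comp_def])
  also have "\<dots> = (\<Sum>h\<in>histories s0 T. \<Sum>a\<in>UNIV. \<Sum>s'\<in>UNIV.
                    hist_prob P T pol h * (pol T (fst h) (snd h) a * P (fst h ! T) a s'))"
    unfolding sum.cartesian_product
    by (intro sum.cong refl) (auto simp: histories_def hist_prob_snoc split: prod.splits)
  also have "\<dots> = (\<Sum>h\<in>histories s0 T. hist_prob P T pol h
                    * (\<Sum>a\<in>UNIV. pol T (fst h) (snd h) a * (\<Sum>s'\<in>UNIV. P (fst h ! T) a s')))"
    by (simp add: sum_distrib_left)
  also have "\<dots> = 1" using IH by (simp add: P_sum pol_sum)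
  finally show ?case .
qed

lemma Gw_Min_wealth_levels:
  fixes P :: "'s::finite \<Rightarrow> 'a::finite \<Rightarrow> 's \<Rightarrow> real"
  assumes "\<And>s a. (\<Sum>s'\<in>UNIV. P s a s') = 1" and "is_policy T pol"
  shows "Gw P circ w0 r s0 T pol (Min (wealth_levels circ w0 r s0 T)) = 1"
proof -
  let ?W = "wealth_levels circ w0 r s0 T"
  have "finite ?W"
    unfolding wealth_levels_def by (intro finite_imageI finite_histories)
  then have "Gw P circ w0 r s0 T pol (Min ?W) = (\<Sum>w'\<in>?W. pw P circ w0 r s0 T pol w')"
    unfolding Gw_def by (intro sum.cong) auto
  also have "\<dots> = (\<Sum>h\<in>histories s0 T. hist_prob P T pol h)"
    unfolding pw_def wealth_levels_def by (rule sum.image_gen[symmetric]) (rule finite_histories)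
  also have "\<dots> = 1" using assms by (rule sum_hist_prob_eq_1)
  finally show ?thesis .
qed

text \<open>Decision rules at times t \<ge> T are irrelevant, so a policy is encoded as an uncurried
 function vanishing there; this makes the policies a compact subset of a product space.\<close>

definition policy_space :: "nat \<Rightarrow> (nat \<times> 's list \<times> 'a::finite list \<times> 'a \<Rightarrow> real) set" where
  "policy_space T = Pi UNIV (\<lambda>i. if fst i < T then {0..1} else {0})
                    \<inter> {f. \<forall>t ss as. t < T \<longrightarrow> (\<Sum>a\<in>UNIV. f (t, ss, as, a)) = 1}"

lemma compact_policy_space:
  "compact (policy_space T :: (nat \<times> 's list \<times> 'a::finite list \<times> 'a \<Rightarrow> real) set)"
proof -
  have "compactin (product_topology (\<lambda>_. euclidean) UNIV)
          (PiE UNIV (\<lambda>i::nat \<times> 's list \<times> 'a list \<times> 'a. if fst i < T then {0..1::real} else {0}))"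
    by (subst compactin_PiE) auto
  then have "compact (Pi UNIV (\<lambda>i::nat \<times> 's list \<times> 'a list \<times> 'a. if fst i < T then {0..1::real} else {0}))"
    by (simp add: euclidean_product_topology PiE_UNIV_domain)
  moreover have "closed {f. \<forall>t ss as. t < T \<longrightarrow> (\<Sum>a\<in>UNIV. f (t, ss, as, a::'a)) = (1::real)}"
    by (intro closed_Collect_all closed_Collect_imp open_Collect_const closed_Collect_eq
        continuous_intros continuous_on_product_coordinates)
  ultimately show ?thesis
    unfolding policy_space_def by (rule compact_Int_closed)
qed

lemma policy_space_is_policy:
  "f \<in> policy_space T \<Longrightarrow> is_policy T (\<lambda>t ss as a. f (t, ss, as, a))"
proof -
  assume f: "f \<in> policy_space T"
  have "f (t, ss, as, a) \<in> {0..1}" if "t < T" for t ss as a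
  proof -
    have "f \<in> Pi UNIV (\<lambda>i. if fst i < T then {0..1} else {0})"
      using f unfolding policy_space_def by blast
    then show ?thesis using that by (auto dest: Pi_mem[where x = "(t, ss, as, a)"])
  qed
  with f show ?thesis
    unfolding policy_space_def is_policy_def by auto
qed

lemma is_policy_le_1: "is_policy T pol \<Longrightarrow> t < T \<Longrightarrow> pol t ss as (a::'a::finite) \<le> 1"
  unfolding is_policy_def by (metis finite UNIV_I member_le_sum)

lemma is_policy_in_policy_space:
  assumes "is_policy T pol"
  shows "(\<lambda>(t, ss, as, a). if t < T then pol t ss as a else 0) \<in> policy_space T"
  using assms is_policy_le_1[OF assms]
  by (auto simp: policy_space_def is_policy_def Pi_iff split: prod.splits)

lemma Gw_cong:
  "(\<And>t. t < T \<Longrightarrow> pol t = pol' t) \<Longrightarrow> Gw P circ w0 r s0 T pol w = Gw P circ w0 r s0 T pol' w"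
  unfolding Gw_def pw_def hist_prob_def by (auto split: prod.splits intro!: sum.cong prod.cong)

lemma continuous_on_Gw:
  "continuous_on UNIV (\<lambda>f::(nat \<times> 's::finite list \<times> 'a::finite list \<times> 'a) \<Rightarrow> real.
      Gw P circ w0 r s0 T (\<lambda>t ss as a. f (t, ss, as, a)) w)"
  unfolding Gw_def pw_def hist_prob_def split_beta
  by (intro continuous_intros continuous_on_product_coordinates)

lemma Gw_has_maximizer:
  fixes P :: "'s::finite \<Rightarrow> 'a::finite \<Rightarrow> 's \<Rightarrow> real"
  shows "\<exists>pol. is_policy T pol \<and>
           (\<forall>pol'. is_policy T pol' \<longrightarrow> Gw P circ w0 r s0 T pol' w \<le> Gw P circ w0 r s0 T pol w)"
proof -
  let ?g = "\<lambda>f. Gw P circ w0 r s0 T (\<lambda>t ss as a. f (t, ss, as, a)) w"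
  have "(\<lambda>i::nat \<times> 's list \<times> 'a list \<times> 'a. if fst i < T then 1 / real CARD('a) else 0)
          \<in> policy_space T"
    by (auto simp: policy_space_def)
  then have "policy_space T \<noteq> ({} :: (nat \<times> 's list \<times> 'a list \<times> 'a \<Rightarrow> real) set)"
    by blast
  from continuous_attains_sup[OF compact_policy_space this
         continuous_on_subset[OF continuous_on_Gw subset_UNIV]]
  obtain f where f: "f \<in> policy_space T" and max: "\<And>f'. f' \<in> policy_space T \<Longrightarrow> ?g f' \<le> ?g f"
    by blast
  have "Gw P circ w0 r s0 T pol' w \<le> ?g f" if pol': "is_policy T pol'" for pol'
  proof -
    let ?f' = "\<lambda>(t, ss, as, a). if t < T then pol' t ss as a else 0"
    have "Gw P circ w0 r s0 T pol' w = ?g ?f'"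
      by (rule Gw_cong) auto
    also have "\<dots> \<le> ?g f"
      by (rule max[OF is_policy_in_policy_space[OF pol']])
    finally show ?thesis .
  qed
  with policy_space_is_policy[OF f] show ?thesis by blast
qed

lemma Gstar_attained:
  fixes P :: "'s::finite \<Rightarrow> 'a::finite \<Rightarrow> 's \<Rightarrow> real"
  obtains pol where "is_policy T pol" and "Gw P circ w0 r s0 T pol w = Gstar P circ w0 r s0 T w"
proof -
  obtain pol where pol: "is_policy T pol"
    and max: "\<And>pol'. is_policy T pol' \<Longrightarrow> Gw P circ w0 r s0 T pol' w \<le> Gw P circ w0 r s0 T pol w"
    using Gw_has_maximizer by blast
  have "Gstar P circ w0 r s0 T w = Gw P circ w0 r s0 T pol w"
    unfolding Gstar_def using pol max by (intro cSup_eq_maximum) auto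
  with pol that show thesis by simp
qed

lemma Gw_le_Gstar:
  fixes P :: "'s::finite \<Rightarrow> 'a::finite \<Rightarrow> 's \<Rightarrow> real"
  assumes "is_policy T pol"
  shows "Gw P circ w0 r s0 T pol w \<le> Gstar P circ w0 r s0 T w"
proof -
  obtain pol' where "is_policy T pol'"
    and "\<And>pol''. is_policy T pol'' \<Longrightarrow> Gw P circ w0 r s0 T pol'' w \<le> Gw P circ w0 r s0 T pol' w"
    using Gw_has_maximizer by blast
  then show ?thesis
    unfolding Gstar_def using assms by (intro cSup_upper bdd_aboveI2) auto
qed

lemma Max_superlevel_mono:
  fixes g h :: "'w::linorder \<Rightarrow> real"
  assumes "finite W" "w \<in> W" "c \<le> g w" "\<And>w. w \<in> W \<Longrightarrow> g w \<le> h w"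
  shows "Max {w\<in>W. c \<le> g w} \<le> Max {w\<in>W. c \<le> h w}"
proof -
  have "Max {w\<in>W. c \<le> g w} \<in> {w\<in>W. c \<le> g w}"
    using assms(1-3) by (intro Max_in) auto
  then show ?thesis
    using assms(1,4) by (intro Max_ge) (auto intro: order_trans)
qed

theorem lemma2:
  fixes P :: "'s::finite \<Rightarrow> 'a::finite \<Rightarrow> 's \<Rightarrow> real"
    and r :: "'s \<Rightarrow> 'a \<Rightarrow> 'r"
    and circ :: "'w::linorder \<Rightarrow> 'r \<Rightarrow> 'w"
    and w0 :: 'w and s0 :: 's and T :: nat and \<tau> :: real
  assumes P_nonneg: "\<And>s a s'. 0 \<le> P s a s'"
    and P_sum: "\<And>s a. (\<Sum>s'\<in>UNIV. P s a s') = 1"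
    and tau: "0 \<le> \<tau>" "\<tau> < 1"
  shows "(\<forall>w. \<exists>pol. is_policy T pol \<and> Gw P circ w0 r s0 T pol w = Gstar P circ w0 r s0 T w)
       \<and> (\<exists>pol. is_policy T pol \<and>
            upper_quantile P circ w0 r s0 T \<tau> pol
              = Max {w\<in>wealth_levels circ w0 r s0 T. Gstar P circ w0 r s0 T w \<ge> 1 - \<tau>})
       \<and> (\<forall>pol. is_policy T pol \<longrightarrow>
            upper_quantile P circ w0 r s0 T \<tau> pol
              \<le> Max {w\<in>wealth_levels circ w0 r s0 T. Gstar P circ w0 r s0 T w \<ge> 1 - \<tau>})"
proof -
  let ?W = "wealth_levels circ w0 r s0 T" and ?Gs = "Gstar P circ w0 r s0 T"
  let ?q = "upper_quantile P circ w0 r s0 T \<tau>" and ?qs = "Max {w\<in>?W. 1 - \<tau> \<le> ?Gs w}"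
  have finW: "finite ?W" and minW: "Min ?W \<in> ?W"
    unfolding wealth_levels_def using finite_histories[of s0 T] histories_nonempty[of s0 T]
    by (auto intro!: Min_in)
  have Gw_Min: "1 - \<tau> \<le> Gw P circ w0 r s0 T pol (Min ?W)" if "is_policy T pol" for pol
  proof -
    have "Gw P circ w0 r s0 T pol (Min ?W) = 1"
      by (rule Gw_Min_wealth_levels) (fact P_sum, fact that)
    with tau show ?thesis by simp
  qed
  have quantile_le: "?q pol \<le> ?qs" if pol: "is_policy T pol" for pol
    unfolding upper_quantile_def
    by (rule Max_superlevel_mono[OF finW minW]) (use Gw_Min[OF pol] Gw_le_Gstar[OF pol] in auto)
  obtain pol0 :: "nat \<Rightarrow> 's list \<Rightarrow> 'a list \<Rightarrow> 'a \<Rightarrow> real" where "is_policy T pol0"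
    using Gw_has_maximizer by blast
  then have "?qs \<in> {w\<in>?W. 1 - \<tau> \<le> ?Gs w}"
    using finW minW order_trans[OF Gw_Min Gw_le_Gstar] by (intro Max_in) auto
  moreover obtain pol where pol: "is_policy T pol" and "Gw P circ w0 r s0 T pol ?qs = ?Gs ?qs"
    using Gstar_attained by blast
  ultimately have "?qs \<le> ?q pol"
    unfolding upper_quantile_def using finW by (intro Max_ge) auto
  with quantile_le[OF pol] pol have "?q pol = ?qs" by simp
  then show ?thesis
    using Gstar_attained quantile_le pol by metis
qed

end
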